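(* Let $S\le T_n$ be a transformation monoid and $G$ the normalizer of $S$ in $S_n$. Then $SG$ is regular if and only if $S$ is regular.
   Context: A transformation monoid is a subsemigroup of $T_n$ containing the identity map; $G=\{g\in S_n:g^{-1}Sg=S\}$ and $SG=\{sg:s\in S,g\in G\}$, a semigroup. A semigroup $U$ is regular if for every $a\in U$ there exists $a'\in U$ with $a=aa'a$. *)

theory Defs
  imports Main
begin

text \<open>Transformations of the n-element set {0..<n}, represented as functions on nat
  that fix every point outside {0..<n}. Maps act on the right: x(fg) = (xf)g.\<close>

definition Tn :: "nat \<Rightarrow> (nat \<Rightarrow> nat) set" where
  "Tn n = {f. f ` {..<n} \<subseteq> {..<n} \<and> (\<forall>i\<ge>n. f i = i)}"

definition Sn :: "nat \<Rightarrow> (nat \<Rightarrow> nat) set" where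
  "Sn n = {f \<in> Tn n. bij_betw f {..<n} {..<n}}"

definition tmul :: "(nat \<Rightarrow> nat) \<Rightarrow> (nat \<Rightarrow> nat) \<Rightarrow> (nat \<Rightarrow> nat)" where
  "tmul f g = g \<circ> f"

definition transformation_monoid :: "nat \<Rightarrow> (nat \<Rightarrow> nat) set \<Rightarrow> bool" where
  "transformation_monoid n S \<longleftrightarrow> S \<subseteq> Tn n \<and> id \<in> S \<and>
     (\<forall>f\<in>S. \<forall>g\<in>S. tmul f g \<in> S)"

definition normalizer :: "nat \<Rightarrow> (nat \<Rightarrow> nat) set \<Rightarrow> (nat \<Rightarrow> nat) set" where
  "normalizer n S = {g \<in> Sn n. \<exists>h\<in>Sn n. tmul g h = id \<and> tmul h g = id \<and>
       (\<lambda>s. tmul (tmul h s) g) ` S = S}"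

definition setmul :: "(nat \<Rightarrow> nat) set \<Rightarrow> (nat \<Rightarrow> nat) set \<Rightarrow> (nat \<Rightarrow> nat) set" where
  "setmul S G = {tmul s g | s g. s \<in> S \<and> g \<in> G}"

definition regular :: "(nat \<Rightarrow> nat) set \<Rightarrow> bool" where
  "regular U \<longleftrightarrow> (\<forall>a\<in>U. \<exists>a'\<in>U. tmul (tmul a a') a = a)"

end

theory Submission
  imports Defs "HOL-Combinatorics.Cycles"
begin

text \<open>If S is regular, an inverse of s g in SG is g^-1 s', where s' is an inverse of s.
  Conversely, if a (t g) a = a with t \<in> S and g in the normalizer, then g can be pushed
  past elements of S (g s = s' g with s' \<in> S), so iterating the equation gives a = a y g^k t a
  with y \<in> S for every k \<ge> 1; since g is a permutation of a finite set, g^k = 1 for some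
  k \<ge> 1, which leaves a = a (y t) a. Products here are written as right actions, as in the
  definitions; in the lemmas below the product s g appears as the composition g \<circ> s.\<close>

lemma regular_comp_iff: "regular U \<longleftrightarrow> (\<forall>a\<in>U. \<exists>a'\<in>U. a \<circ> a' \<circ> a = a)"
  unfolding regular_def tmul_def by (simp add: o_assoc)

lemma setmul_comp: "setmul S G = {g \<circ> s | s g. s \<in> S \<and> g \<in> G}"
  unfolding setmul_def tmul_def ..

lemma transformation_monoid_comp_closed:
  "transformation_monoid n S \<Longrightarrow> s \<in> S \<Longrightarrow> t \<in> S \<Longrightarrow> s \<circ> t \<in> S"
  unfolding transformation_monoid_def tmul_def by blast

lemma id_in_normalizer: "id \<in> normalizer n S"
  unfolding normalizer_def Sn_def Tn_def tmul_def by (auto simp: bij_betw_def)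

lemma subset_setmul_normalizer: "S \<subseteq> setmul S (normalizer n S)"
proof
  fix s assume "s \<in> S"
  moreover have "s = id \<circ> s" by simp
  ultimately show "s \<in> setmul S (normalizer n S)"
    unfolding setmul_comp using id_in_normalizer by blast
qed

lemma normalizer_inverse:
  assumes "g \<in> normalizer n S"
  obtains h where "h \<in> normalizer n S" "g \<circ> h = id" "h \<circ> g = id" "(\<lambda>s. g \<circ> s \<circ> h) ` S = S"
proof -
  from assms obtain h where g: "g \<in> Sn n" and h: "h \<in> Sn n"
    and gh: "g \<circ> h = id" and hg: "h \<circ> g = id" and conj: "(\<lambda>s. g \<circ> s \<circ> h) ` S = S"
    unfolding normalizer_def tmul_def by (auto simp: o_assoc)
  have hgx: "\<And>x. h (g x) = x"
    using comp_eq_dest_lhs[OF hg] by simp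
  have "(\<lambda>s. h \<circ> s \<circ> g) ` S = (\<lambda>s. h \<circ> s \<circ> g) ` (\<lambda>s. g \<circ> s \<circ> h) ` S"
    using conj by simp
  also have "\<dots> = S"
    by (simp add: image_image comp_def hgx)
  finally have "h \<in> normalizer n S"
    unfolding normalizer_def tmul_def using g h gh hg
    by (intro CollectI conjI bexI[of _ g]) (simp_all add: o_assoc)
  then show thesis using gh hg conj by (rule that)
qed

lemma normalizer_commute:
  assumes "g \<in> normalizer n S" "s \<in> S"
  shows "\<exists>s'\<in>S. g \<circ> s = s' \<circ> g"
proof -
  obtain h where "h \<in> normalizer n S" "g \<circ> h = id"
    and hg: "h \<circ> g = id" and conj: "(\<lambda>s. g \<circ> s \<circ> h) ` S = S"
    using assms(1) by (rule normalizer_inverse)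
  have "g \<circ> s \<circ> h \<in> S"
    using assms(2) conj by blast
  moreover have "g \<circ> s = (g \<circ> s \<circ> h) \<circ> g"
    using hg by (simp add: comp_assoc)
  ultimately show ?thesis by blast
qed

lemma normalizer_funpow_id:
  assumes "g \<in> normalizer n S"
  obtains m where "0 < m" "g ^^ m = id"
proof -
  from assms have "g permutes {..<n}"
    by (intro bij_imp_permutes) (auto simp: normalizer_def Sn_def Tn_def)
  then have "permutation g"
    using permutation_permutes by blast
  then show thesis
    using permutation_is_nilpotent that by blast
qed

lemma funpow_comp_commute:
  assumes "\<forall>s\<in>S. \<exists>s'\<in>S. g \<circ> s = s' \<circ> g" "s \<in> S"
  shows "\<exists>s'\<in>S. g ^^ k \<circ> s = s' \<circ> g ^^ k"
proof (induction k)
  case 0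
  show ?case using assms(2) by auto
next
  case (Suc k)
  then obtain s' where "s' \<in> S" "g ^^ k \<circ> s = s' \<circ> g ^^ k" by blast
  moreover obtain s'' where "s'' \<in> S" "g \<circ> s' = s'' \<circ> g"
    using assms(1) \<open>s' \<in> S\<close> by blast
  ultimately have "g ^^ Suc k \<circ> s = s'' \<circ> g ^^ Suc k"
    by (simp add: fun_eq_iff comp_eq_dest[of g s' s'' g] comp_eq_dest[of "g ^^ k" s s' "g ^^ k"])
  with \<open>s'' \<in> S\<close> show ?case by blast
qed

lemma regular_element_if_twisted_inverse:
  fixes S :: "('a \<Rightarrow> 'a) set"
  assumes closed: "\<And>s t. s \<in> S \<Longrightarrow> t \<in> S \<Longrightarrow> s \<circ> t \<in> S" and "id \<in> S"
    and commute: "\<forall>s\<in>S. \<exists>s'\<in>S. g \<circ> s = s' \<circ> g"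
    and order: "0 < m" "g ^^ m = id"
    and "a \<in> S" "t \<in> S" and twisted: "a \<circ> g \<circ> t \<circ> a = a"
  shows "\<exists>y\<in>S. a \<circ> y \<circ> a = a"
proof -
  have iterate: "\<exists>y\<in>S. a \<circ> y \<circ> g ^^ Suc k \<circ> t \<circ> a = a" for k
  proof (induction k)
    case 0
    have "a \<circ> id \<circ> g ^^ Suc 0 \<circ> t \<circ> a = a" using twisted by simp
    with \<open>id \<in> S\<close> show ?case by blast
  next
    case (Suc k)
    then obtain y where "y \<in> S" and y: "a \<circ> y \<circ> g ^^ Suc k \<circ> t \<circ> a = a" by blast
    obtain s' where "s' \<in> S" and s': "g ^^ Suc k \<circ> (t \<circ> a) = s' \<circ> g ^^ Suc k"
      using funpow_comp_commute[OF commute closed] \<open>t \<in> S\<close> \<open>a \<in> S\<close> by blast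
    have "a = a \<circ> y \<circ> (g ^^ Suc k \<circ> (t \<circ> a)) \<circ> g \<circ> t \<circ> a"
      using y twisted by (metis o_assoc)
    also have "\<dots> = a \<circ> y \<circ> (s' \<circ> g ^^ Suc k) \<circ> g \<circ> t \<circ> a"
      by (simp only: s')
    also have "\<dots> = a \<circ> (y \<circ> s') \<circ> g ^^ Suc (Suc k) \<circ> t \<circ> a"
      by (simp only: funpow_Suc_right[of "Suc k" g] o_assoc)
    finally show ?case using closed[OF \<open>y \<in> S\<close> \<open>s' \<in> S\<close>] by metis
  qed
  from order obtain k where gk: "g ^^ Suc k = id"
    using gr0_implies_Suc by blast
  obtain y where "y \<in> S" "a \<circ> y \<circ> g ^^ Suc k \<circ> t \<circ> a = a"
    using iterate by blast
  then have "a \<circ> (y \<circ> t) \<circ> a = a"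
    unfolding gk by (simp add: o_assoc)
  then show ?thesis using closed \<open>y \<in> S\<close> \<open>t \<in> S\<close> by blast
qed

lemma regular_setmul_normalizer:
  assumes "regular S"
  shows "regular (setmul S (normalizer n S))"
  unfolding regular_comp_iff
proof
  fix b assume "b \<in> setmul S (normalizer n S)"
  then obtain s g where "s \<in> S" "g \<in> normalizer n S" and b: "b = g \<circ> s"
    unfolding setmul_comp by blast
  obtain h where "h \<in> normalizer n S" "g \<circ> h = id"
    and hg: "h \<circ> g = id" and conj: "(\<lambda>s. g \<circ> s \<circ> h) ` S = S"
    using \<open>g \<in> normalizer n S\<close> by (rule normalizer_inverse)
  have hgx: "\<And>x. h (g x) = x"
    using comp_eq_dest_lhs[OF hg] by simp
  obtain s' where "s' \<in> S" and s': "s \<circ> s' \<circ> s = s"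
    using assms \<open>s \<in> S\<close> unfolding regular_comp_iff by blast
  have "s' \<circ> h = h \<circ> (g \<circ> s' \<circ> h)" "g \<circ> s' \<circ> h \<in> S"
    using hgx conj \<open>s' \<in> S\<close> by (auto simp: fun_eq_iff)
  then have "s' \<circ> h \<in> setmul S (normalizer n S)"
    unfolding setmul_comp using \<open>h \<in> normalizer n S\<close> by blast
  moreover have "b \<circ> (s' \<circ> h) \<circ> b = g \<circ> (s \<circ> s' \<circ> s)"
    using b hgx by (simp add: fun_eq_iff)
  ultimately show "\<exists>b'\<in>setmul S (normalizer n S). b \<circ> b' \<circ> b = b"
    using b s' by auto
qed

lemma regular_if_regular_setmul_normalizer:
  assumes "transformation_monoid n S" "regular (setmul S (normalizer n S))"
  shows "regular S"
  unfolding regular_comp_iff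
proof
  fix a assume "a \<in> S"
  then obtain a' where "a' \<in> setmul S (normalizer n S)" "a \<circ> a' \<circ> a = a"
    using assms(2) subset_setmul_normalizer unfolding regular_comp_iff by blast
  then obtain t g where t: "t \<in> S" and g: "g \<in> normalizer n S"
    and twisted: "a \<circ> g \<circ> t \<circ> a = a"
    unfolding setmul_comp by (auto simp: o_assoc)
  obtain m where order: "0 < m" "g ^^ m = id"
    using g by (rule normalizer_funpow_id)
  have "id \<in> S"
    using assms(1) unfolding transformation_monoid_def by blast
  have commute: "\<forall>s\<in>S. \<exists>s'\<in>S. g \<circ> s = s' \<circ> g"
    using normalizer_commute[OF g] by blast
  show "\<exists>a'\<in>S. a \<circ> a' \<circ> a = a"
    by (rule regular_element_if_twisted_inverse[OF transformation_monoid_comp_closed[OF assms(1)]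
          \<open>id \<in> S\<close> commute order \<open>a \<in> S\<close> t twisted])
qed

theorem corollary4p5:
  fixes n :: nat and S :: "(nat \<Rightarrow> nat) set"
  assumes "transformation_monoid n S"
  shows "regular (setmul S (normalizer n S)) \<longleftrightarrow> regular S"
  using regular_if_regular_setmul_normalizer[OF assms] regular_setmul_normalizer by blast

end
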